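(* Let $K$ be a semifield. Let $P$ be a polygon with vertex set $V$ and a non-empty dissection $D$, and let $d=\{\zeta,\eta\}\in D$ be such that $D = \{d\}\cup D_2$ where $D_2$ is a dissection of the subpolygon $P_2$ with vertex set $V_2 = \{\varepsilon \in V : \eta \le \varepsilon \le \zeta\}$. Let $U_1 = \{\varepsilon\in V : \zeta<\varepsilon<\eta\}$, $U_2 = \{\varepsilon\in V : \eta<\varepsilon<\zeta\}$, and let $\alpha \in U_1$, $\beta \in U_2$. Let $f : \operatorname{diag}(P) \to K$ be a map such that $f|_{\operatorname{diag}(P_2)}$ satisfies the $T$-path formula with respect to $D_2$. Then \[ f(\zeta,\eta)^{-1}\big[ f(\alpha,\zeta)f(\eta,\beta) + f(\alpha,\eta)f(\zeta,\beta) \big] = \sum_{\pi\in\mathcal{T}_{P,D}(\alpha,\beta)} f(\pi). \]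
   Context: A semifield is a set $K$ with binary operations $+,\cdot$ such that $+$ is associative and commutative, $(K,\cdot)$ is a commutative group, and $\cdot$ distributes over $+$; $x/y := xy^{-1}$. A polygon is a finite set $V$ of at least three vertices with a cyclic order, pictured as a convex polygon in the plane with vertices anticlockwise. "$a\le\varepsilon\le b$" means $\varepsilon$ lies on the cyclic interval from $a$ to $b$ in the positive direction, endpoints included; "$<$" excludes the corresponding endpoint. A subpolygon is a subset of at least three vertices with induced cyclic order. A diagonal is a two-element subset of the vertex set (edges included); $\operatorname{diag}(Q)$ is the set of diagonals of $Q$; non-edges are internal. Diagonals cross if they consist of four distinct vertices $\alpha,\beta,\gamma,\delta$ appearing cyclically as $\alpha,\gamma,\beta,\delta$ or $\alpha,\delta,\beta,\gamma$. A dissection is a set of pairwise non-crossing internal diagonals. For a dissection $D$ of a polygon $Q$ and vertices $\pi_1\neq\pi_p$, a $T$-path from $\pi_1$ to $\pi_p$ is a tuple $(\pi_1,\dots,\pi_p)$ of vertices of $Q$ with: (i) $\{\pi_1,\pi_2\},\dots,\{\pi_{p-1},\pi_p\}$ pairwise different diagonals; (ii) no $\{\pi_i,\pi_{i+1}\}$ crosses a diagonal of $D$; (iii) each $\{\pi_{2j},\pi_{2j+1}\}$ lies in $D$, and these cross the segment $\{\pi_1,\pi_p\}$ at pairwise different points progressing monotonically from $\pi_1$ to $\pi_p$. $\mathcal{T}_{Q,D}(\alpha,\beta)$ is the set of these. With $f(\alpha,\beta):=f(\{\alpha,\beta\})$, $f(\pi) := \prod_{i\text{ odd}} f(\pi_i,\pi_{i+1})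 / \prod_{j\text{ even}} f(\pi_j,\pi_{j+1})$. A map $g:\operatorname{diag}(Q)\to K$ satisfies the $T$-path formula with respect to $D$ if $g(\alpha,\beta) = \sum_{\pi\in\mathcal{T}_{Q,D}(\alpha,\beta)} g(\pi)$ for all vertices $\alpha\neq\beta$ of $Q$. *)

theory Defs
  imports Main
begin

class semifield = ab_semigroup_add + comm_monoid_mult + inverse +
  assumes sf_left_inverse: "inverse a * a = 1"
  assumes sf_divide: "a / b = a * inverse b"
  assumes sf_distrib: "(a + b) * c = a * c + b * c"

text \<open>Sum over a finite non-empty set in a commutative semigroup (no zero needed).\<close>

definition nesum :: "('a \<Rightarrow> 'k::ab_semigroup_add) \<Rightarrow> 'a set \<Rightarrow> 'k" where
  "nesum g A = (let a = (SOME a. a \<in> A) in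
                  Finite_Set.fold (\<lambda>x s. g x + s) (g a) (A - {a}))"

text \<open>Vertices are elements of a linearly ordered type; a polygon is a finite set
  of at least three vertices, its cyclic order being the one induced by the linear
  order (every cyclic order on a finite set arises this way).\<close>

definition polygon :: "'v::linorder set \<Rightarrow> bool" where
  "polygon V \<longleftrightarrow> finite V \<and> card V \<ge> 3"

definition cyc_cc :: "'v::linorder \<Rightarrow> 'v \<Rightarrow> 'v \<Rightarrow> bool" where
  "cyc_cc a e b \<longleftrightarrow> (if a \<le> b then a \<le> e \<and> e \<le> b else a \<le> e \<or> e \<le> b)"

definition cyc_oo :: "'v::linorder \<Rightarrow> 'v \<Rightarrow> 'v \<Rightarrow> bool" where
  "cyc_oo a e b \<longleftrightarrow> cyc_cc a e b \<and> e \<noteq> a \<and> e \<noteq> b"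

definition diag :: "'v set \<Rightarrow> 'v set set" where
  "diag Q = {{a, b} | a b. a \<in> Q \<and> b \<in> Q \<and> a \<noteq> b}"

definition is_edge :: "'v::linorder set \<Rightarrow> 'v set \<Rightarrow> bool" where
  "is_edge Q d \<longleftrightarrow> d \<in> diag Q \<and>
     (\<exists>a b. d = {a, b} \<and> \<not> (\<exists>e\<in>Q. cyc_oo a e b))"

definition internal :: "'v::linorder set \<Rightarrow> 'v set \<Rightarrow> bool" where
  "internal Q d \<longleftrightarrow> d \<in> diag Q \<and> \<not> is_edge Q d"

definition crosses :: "'v::linorder set \<Rightarrow> 'v set \<Rightarrow> bool" where
  "crosses d1 d2 \<longleftrightarrow> (\<exists>a b c e. d1 = {a, b} \<and> d2 = {c, e} \<and>
       distinct [a, b, c, e] \<and> cyc_oo a c b \<and> cyc_oo b e a)"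

definition dissection :: "'v::linorder set \<Rightarrow> 'v set set \<Rightarrow> bool" where
  "dissection Q D \<longleftrightarrow> (\<forall>d\<in>D. internal Q d) \<and> (\<forall>d1\<in>D. \<forall>d2\<in>D. \<not> crosses d1 d2)"

definition step :: "'v list \<Rightarrow> nat \<Rightarrow> 'v set" where
  "step \<pi> k = {\<pi> ! k, \<pi> ! Suc k}"

definition side_towards :: "'v::linorder set \<Rightarrow> 'v \<Rightarrow> 'v set" where
  "side_towards d b = {e. \<exists>x y. d = {x, y} \<and> cyc_oo x b y \<and> cyc_cc x e y}"

text \<open>Diagonal d' meets the segment {a,b} strictly after diagonal d (going from a
  to b), both crossing the segment and being non-crossing: d' lies on the b-side of d.\<close>
definition cross_before :: "'v::linorder \<Rightarrow> 'v \<Rightarrow> 'v set \<Rightarrow> 'v set \<Rightarrow> bool" where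
  "cross_before a b d d' \<longleftrightarrow> d \<noteq> d' \<and> d' \<subseteq> side_towards d b"

text \<open>T-paths as lists [pi_1, ..., pi_p]; step k (0-based) is the step
  {pi_(k+1), pi_(k+2)}, so the paper's even steps are the odd k.\<close>
definition Tpaths :: "'v::linorder set \<Rightarrow> 'v set set \<Rightarrow> 'v \<Rightarrow> 'v \<Rightarrow> 'v list set" where
  "Tpaths Q D a b = {\<pi>. length \<pi> \<ge> 2 \<and> hd \<pi> = a \<and> last \<pi> = b \<and> set \<pi> \<subseteq> Q \<and>
     (\<forall>k < length \<pi> - 1. step \<pi> k \<in> diag Q) \<and>
     (\<forall>k < length \<pi> - 1. \<forall>l < length \<pi> - 1. k \<noteq> l \<longrightarrow> step \<pi> k \<noteq> step \<pi> l) \<and>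
     (\<forall>k < length \<pi> - 1. \<forall>d\<in>D. \<not> crosses (step \<pi> k) d) \<and>
     (\<forall>k < length \<pi> - 1. odd k \<longrightarrow> step \<pi> k \<in> D \<and> crosses (step \<pi> k) {a, b}) \<and>
     (\<forall>k < length \<pi> - 1. \<forall>l < length \<pi> - 1. odd k \<and> odd l \<and> k < l \<longrightarrow>
          cross_before a b (step \<pi> k) (step \<pi> l))}"

definition tweight :: "('v set \<Rightarrow> 'k::semifield) \<Rightarrow> 'v list \<Rightarrow> 'k" where
  "tweight f \<pi> = (\<Prod>k\<in>{k. k < length \<pi> - 1 \<and> even k}. f (step \<pi> k)) /
                  (\<Prod>k\<in>{k. k < length \<pi> - 1 \<and> odd k}. f (step \<pi> k))"

definition T_formula :: "'v::linorder set \<Rightarrow> 'v set set \<Rightarrow> ('v set \<Rightarrow> 'k::semifield) \<Rightarrow> bool" where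
  "T_formula Q D g \<longleftrightarrow> (\<forall>a\<in>Q. \<forall>b\<in>Q. a \<noteq> b \<longrightarrow> g {a, b} = nesum (tweight g) (Tpaths Q D a b))"

end

theory Submission
  imports Defs
begin

(* Every diagonal of D lies on the closed arc from \<eta> to \<zeta> (the side of \<beta>), so
   the only diagonal separating \<alpha> from that arc is d = {\<zeta>, \<eta>}.  Hence the second vertex p
   of a T-path from \<alpha> to \<beta> is \<zeta> or \<eta>; call the other endpoint q.  T-paths of P from \<alpha>
   with second vertex p correspond bijectively to T-paths of P\<^sub>2 from q to \<beta>: a T-path
   of P\<^sub>2 starting with the step q p becomes one of P by replacing q with \<alpha>, any other one
   by prepending \<alpha> p.  In both cases the weight gets multiplied by f(\<alpha>, p) / f(\<zeta>, \<eta>), so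
   summing over the two choices of p and using the T-path formula in P\<^sub>2 gives the claim. *)

section \<open>Cyclic order and crossing diagonals\<close>

lemma cyc_oo_iff_less: "cyc_oo a e b \<longleftrightarrow> a < e \<and> e < b \<or> e < b \<and> b < a \<or> b < a \<and> a < e"
  unfolding cyc_oo_def cyc_cc_def by auto

lemma cyc_cc_iff_less:
  "cyc_cc a e b \<longleftrightarrow> e = a \<or> e = b \<or> a < e \<and> e < b \<or> e < b \<and> b < a \<or> b < a \<and> a < e"
  unfolding cyc_oo_def cyc_cc_def by auto

lemma cyc_cc_endpoints [simp]: "cyc_cc a a b" "cyc_cc a b b"
  unfolding cyc_cc_def by auto

lemma cyc_oo_distinct: "cyc_oo a e b \<Longrightarrow> a \<noteq> b"
  unfolding cyc_oo_iff_less by auto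

lemma cyc_oo_iff_if:
  "cyc_oo a e b \<longleftrightarrow> e \<noteq> a \<and> e \<noteq> b \<and> (if a \<le> b then a < e \<and> e < b else a < e \<or> e < b)"
  unfolding cyc_oo_iff_less by auto

lemma cyc_oo_swap: "a \<noteq> b \<Longrightarrow> e \<noteq> a \<Longrightarrow> e \<noteq> b \<Longrightarrow> cyc_oo a e b \<longleftrightarrow> \<not> cyc_oo b e a"
  unfolding cyc_oo_iff_less by auto

lemma crosses_iff_less:
  "crosses {a, b} {c, e} \<longleftrightarrow>
     a \<noteq> b \<and> a \<noteq> c \<and> a \<noteq> e \<and> b \<noteq> c \<and> b \<noteq> e \<and> c \<noteq> e \<and> (cyc_oo a c b \<longleftrightarrow> cyc_oo b e a)"
  (is "_ \<longleftrightarrow> ?rhs")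
proof
  assume "crosses {a, b} {c, e}"
  then obtain a' b' c' e' where eqs: "{a, b} = {a', b'}" "{c, e} = {c', e'}"
    and sides: "distinct [a', b', c', e']" "cyc_oo a' c' b'" "cyc_oo b' e' a'"
    unfolding crosses_def by blast
  from eqs have "(a = a' \<and> b = b' \<or> a = b' \<and> b = a') \<and> (c = c' \<and> e = e' \<or> c = e' \<and> e = c')"
    by (auto simp: doubleton_eq_iff)
  with sides show ?rhs
    unfolding cyc_oo_iff_if by (auto split: if_splits)
next
  assume rhs: ?rhs
  show "crosses {a, b} {c, e}"
  proof (cases "cyc_oo a c b")
    case True
    with rhs show ?thesis
      unfolding crosses_def by fastforce
  next
    case False
    with rhs have "cyc_oo a e b" "cyc_oo b c a"
      using cyc_oo_swap[of a b e] cyc_oo_swap[of b a c] by auto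
    moreover have "{c, e} = {e, c}"
      by auto
    ultimately show ?thesis
      using rhs unfolding crosses_def by fastforce
  qed
qed

lemmas cyclic_order_simps = crosses_iff_less cyc_cc_iff_less cyc_oo_iff_less

lemma crosses_commute: "crosses c d \<longleftrightarrow> crosses d c"
proof -
  have "crosses d c" if "crosses c d" for c d :: "'a set"
  proof -
    from that obtain a b u v where c: "c = {a, b}" and d: "d = {u, v}"
      unfolding crosses_def by blast
    from that have "crosses {a, b} {u, v}"
      unfolding c d .
    then have "crosses {u, v} {a, b}"
      unfolding crosses_iff_less cyc_oo_iff_if by (auto split: if_splits)
    then show ?thesis
      unfolding c d .
  qed
  then show ?thesis
    by blast
qed

lemma crosses_not_mem: "crosses c {a, b} \<Longrightarrow> a \<notin> c"
  unfolding crosses_def by (auto simp: doubleton_eq_iff)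

lemma crossing_orientation:
  assumes "crosses c {a, b}"
  obtains x y where "c = {x, y}" "cyc_oo x b y" "cyc_oo y a x"
proof -
  obtain s t where c: "c = {s, t}"
    using assms unfolding crosses_def by blast
  from assms have "crosses {s, t} {a, b}"
    unfolding c .
  then have "cyc_oo s b t \<and> cyc_oo t a s \<or> cyc_oo t b s \<and> cyc_oo s a t"
    unfolding cyclic_order_simps by (smt (verit) less_trans less_irrefl linorder_neqE)
  then show thesis
    using that c by (metis insert_commute)
qed

lemma side_towards_eq: "cyc_oo x b y \<Longrightarrow> side_towards {x, y} b = {v. cyc_cc x v y}"
  unfolding side_towards_def
  by (auto simp: doubleton_eq_iff) (auto simp: cyc_cc_iff_less cyc_oo_iff_less)

lemma noncrossing_same_side:
  assumes "\<not> crosses {s, t} {x, y}" "{s, t} \<noteq> {x, y}" "s \<noteq> t" "x \<noteq> y"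
  shows "cyc_cc x s y \<and> cyc_cc x t y \<or> cyc_cc y s x \<and> cyc_cc y t x"
  using assms unfolding cyclic_order_simps doubleton_eq_iff
  by (smt (verit) less_trans less_irrefl linorder_neqE)

lemma opposite_arcs_not_crossing:
  assumes "cyc_cc x u y" "cyc_cc x v y" "cyc_cc y s x" "cyc_cc y t x"
  shows "\<not> crosses {u, v} {s, t}"
  using assms unfolding cyclic_order_simps by (smt (verit) less_trans less_irrefl linorder_neqE)

lemma arc_nested:
  assumes "cyc_oo x b y" "cyc_cc y s x" "cyc_cc y t x" "cyc_oo s b t" "cyc_cc t v s"
  shows "cyc_cc y v x"
  using assms unfolding cyclic_order_simps by (smt (verit) less_trans less_irrefl linorder_neqE)

lemma arc_nested_eq:
  assumes "cyc_oo x b y" "cyc_cc y s x" "cyc_cc y t x" "cyc_oo s b t" "cyc_cc t x s" "cyc_cc t y s"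
  shows "s = x \<and> t = y"
  using assms unfolding cyclic_order_simps by (smt (verit) less_trans less_irrefl linorder_neqE)

lemma diag_mono: "A \<subseteq> B \<Longrightarrow> diag A \<subseteq> diag B"
  unfolding diag_def by blast

lemma finite_diag: "finite Q \<Longrightarrow> finite (diag Q)"
  by (rule finite_subset[of _ "Pow Q"]) (auto simp: diag_def)

lemma arc_endpoints_edge:
  assumes "x \<in> V" "y \<in> V" "x \<noteq> y"
  shows "is_edge {v \<in> V. cyc_cc x v y} {x, y}"
  unfolding is_edge_def
proof (intro conjI exI)
  show "{x, y} \<in> diag {v \<in> V. cyc_cc x v y}"
    using assms cyc_cc_endpoints unfolding diag_def by blast
  show "{x, y} = {y, x}"
    by (rule insert_commute)
  show "\<not> (\<exists>e\<in>{v \<in> V. cyc_cc x v y}. cyc_oo y e x)"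
    unfolding cyclic_order_simps by (smt (verit) mem_Collect_eq less_trans less_irrefl linorder_neqE)
qed

fun steps :: "'a list \<Rightarrow> 'a set list" where
  "steps (u # v # w) = {u, v} # steps (v # w)"
| "steps _ = []"

lemma length_steps [simp]: "length (steps \<pi>) = length \<pi> - 1"
  by (induction \<pi> rule: steps.induct) auto

lemma nth_steps: "k < length \<pi> - 1 \<Longrightarrow> steps \<pi> ! k = step \<pi> k"
  by (induction \<pi> arbitrary: k rule: steps.induct) (auto simp: step_def nth_Cons split: nat.split)

lemma steps_eq_map_step: "steps \<pi> = map (step \<pi>) [0..<length \<pi> - 1]"
  by (rule nth_equalityI) (simp_all add: nth_steps)

lemma steps_Cons: "\<rho> \<noteq> [] \<Longrightarrow> steps (u # \<rho>) = {u, hd \<rho>} # steps \<rho>"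
  by (cases \<rho>) auto

lemma steps_subset: "c \<in> set (steps \<pi>) \<Longrightarrow> c \<subseteq> set \<pi>"
  by (induction \<pi> rule: steps.induct) auto

lemma steps_diag_restrict:
  assumes "set (steps \<pi>) \<subseteq> diag Q" "set \<pi> \<subseteq> Q'"
  shows "set (steps \<pi>) \<subseteq> diag Q'"
proof
  fix c assume c: "c \<in> set (steps \<pi>)"
  with assms(1) obtain u v where "c = {u, v}" "u \<noteq> v"
    unfolding diag_def by blast
  moreover from c assms(2) have "c \<subseteq> Q'"
    using steps_subset by blast
  ultimately show "c \<in> diag Q'"
    unfolding diag_def by blast
qed

fun odd_entries :: "'a list \<Rightarrow> 'a list" where
  "odd_entries (u # v # w) = v # odd_entries w"
| "odd_entries _ = []"

lemma odd_entries_Cons: "odd_entries (u # w) = odd_entries (u' # w)"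
  by (cases w) auto

lemma set_odd_entries_subset: "set (odd_entries xs) \<subseteq> set xs"
  by (induction xs rule: odd_entries.induct) (simp_all, blast)

lemma length_odd_entries: "length (odd_entries xs) = length xs div 2"
  by (induction xs rule: odd_entries.induct) auto

lemma nth_odd_entries: "i < length xs div 2 \<Longrightarrow> odd_entries xs ! i = xs ! Suc (2 * i)"
  by (induction xs arbitrary: i rule: odd_entries.induct) (auto simp: nth_Cons split: nat.split)

lemma odd_less_iff: "odd k \<and> k < n \<longleftrightarrow> (\<exists>i < n div 2. k = Suc (2 * i))"
  by presburger

lemma set_odd_entries: "set (odd_entries xs) = (!) xs ` {k. k < length xs \<and> odd k}"
proof -
  have "set (odd_entries xs) = (\<lambda>i. odd_entries xs ! i) ` {..<length xs div 2}"
    by (metis length_odd_entries list.set_map map_nth atLeast_upt)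
  also have "\<dots> = (\<lambda>i. xs ! Suc (2 * i)) ` {..<length xs div 2}"
    by (rule image_cong) (simp_all add: nth_odd_entries)
  also have "\<dots> = (!) xs ` {k. k < length xs \<and> odd k}"
  proof -
    have "{k. k < length xs \<and> odd k} = (\<lambda>i. Suc (2 * i)) ` {..<length xs div 2}"
      using odd_less_iff by blast
    then show ?thesis
      by (simp add: image_image)
  qed
  finally show ?thesis .
qed

lemma sorted_wrt_odd_entries:
  "sorted_wrt R (odd_entries xs) \<longleftrightarrow>
     (\<forall>k l. odd k \<longrightarrow> odd l \<longrightarrow> k < l \<longrightarrow> l < length xs \<longrightarrow> R (xs ! k) (xs ! l))"
  (is "_ \<longleftrightarrow> ?odd_sorted")
proof
  assume sorted: "sorted_wrt R (odd_entries xs)"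
  show ?odd_sorted
  proof (intro allI impI)
    fix k l assume "odd k" "odd l" "k < l" "l < length xs"
    moreover define i j where "i = k div 2" and "j = l div 2"
    ultimately have "k = Suc (2 * i)" "l = Suc (2 * j)" "i < j" "j < length xs div 2"
      by presburger+
    with sorted show "R (xs ! k) (xs ! l)"
      unfolding sorted_wrt_iff_nth_less length_odd_entries by (metis nth_odd_entries order.strict_trans)
  qed
next
  assume odd_sorted: ?odd_sorted
  show "sorted_wrt R (odd_entries xs)"
    unfolding sorted_wrt_iff_nth_less length_odd_entries
  proof (intro allI impI)
    fix i j assume "i < j" "j < length xs div 2"
    moreover from this have "odd (Suc (2 * i))" "odd (Suc (2 * j))" "Suc (2 * i) < Suc (2 * j)"
      "Suc (2 * j) < length xs"
      by presburger+
    ultimately show "R (odd_entries xs ! i) (odd_entries xs ! j)"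
      using odd_sorted by (simp add: nth_odd_entries)
  qed
qed

lemma set_tl_subset_odd_steps: "set (tl \<pi>) \<subseteq> insert (last \<pi>) (\<Union> (set (odd_entries (steps \<pi>))))"
proof (induction \<pi> rule: odd_entries.induct)
  case (1 u v w)
  show ?case
  proof (cases w)
    case (Cons z r)
    with "1.IH" show ?thesis
      by auto
  qed simp
qed auto

text \<open>The entries of \<open>odd_entries (steps \<pi>)\<close> are the steps the paper numbers even.\<close>

lemma Tpaths_iff:
  "\<pi> \<in> Tpaths Q D a b \<longleftrightarrow>
     2 \<le> length \<pi> \<and> hd \<pi> = a \<and> last \<pi> = b \<and> set \<pi> \<subseteq> Q \<and>
     set (steps \<pi>) \<subseteq> diag Q \<and> distinct (steps \<pi>) \<and> (\<forall>c\<in>set (steps \<pi>). \<forall>d\<in>D. \<not> crosses c d) \<and>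
     (\<forall>c\<in>set (odd_entries (steps \<pi>)). c \<in> D \<and> crosses c {a, b}) \<and>
     sorted_wrt (cross_before a b) (odd_entries (steps \<pi>))"
proof -
  let ?n = "length \<pi> - 1"
  have set_steps: "set (steps \<pi>) = step \<pi> ` {..<?n}"
    by (simp add: steps_eq_map_step atLeast_upt)
  have set_odd_steps: "set (odd_entries (steps \<pi>)) = step \<pi> ` {k. k < ?n \<and> odd k}"
    unfolding set_odd_entries length_steps by (rule image_cong) (simp_all add: nth_steps)
  have "set (steps \<pi>) \<subseteq> diag Q \<longleftrightarrow> (\<forall>k < ?n. step \<pi> k \<in> diag Q)"
    and "distinct (steps \<pi>) \<longleftrightarrow> (\<forall>k < ?n. \<forall>l < ?n. k \<noteq> l \<longrightarrow> step \<pi> k \<noteq> step \<pi> l)"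
    and "(\<forall>c\<in>set (steps \<pi>). \<forall>d\<in>D. \<not> crosses c d) \<longleftrightarrow> (\<forall>k < ?n. \<forall>d\<in>D. \<not> crosses (step \<pi> k) d)"
    and "(\<forall>c\<in>set (odd_entries (steps \<pi>)). c \<in> D \<and> crosses c {a, b}) \<longleftrightarrow>
      (\<forall>k < ?n. odd k \<longrightarrow> step \<pi> k \<in> D \<and> crosses (step \<pi> k) {a, b})"
    and "sorted_wrt (cross_before a b) (odd_entries (steps \<pi>)) \<longleftrightarrow>
      (\<forall>k < ?n. \<forall>l < ?n. odd k \<and> odd l \<and> k < l \<longrightarrow> cross_before a b (step \<pi> k) (step \<pi> l))"
    unfolding set_steps set_odd_steps sorted_wrt_odd_entries
    by (auto simp: distinct_conv_nth nth_steps)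
  then show ?thesis
    unfolding Tpaths_def mem_Collect_eq by (simp only:)
qed

lemma
  assumes "\<pi> \<in> Tpaths Q D a b"
  shows Tpaths_length: "2 \<le> length \<pi>"
    and Tpaths_last: "last \<pi> = b"
    and Tpaths_set: "set \<pi> \<subseteq> Q"
    and Tpaths_steps_diag: "set (steps \<pi>) \<subseteq> diag Q"
    and Tpaths_steps_distinct: "distinct (steps \<pi>)"
    and Tpaths_steps_not_crossing: "\<And>c d. c \<in> set (steps \<pi>) \<Longrightarrow> d \<in> D \<Longrightarrow> \<not> crosses c d"
    and Tpaths_odd_steps_in: "\<And>c. c \<in> set (odd_entries (steps \<pi>)) \<Longrightarrow> c \<in> D"
    and Tpaths_odd_steps_cross: "\<And>c. c \<in> set (odd_entries (steps \<pi>)) \<Longrightarrow> crosses c {a, b}"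
    and Tpaths_odd_steps_sorted: "sorted_wrt (cross_before a b) (odd_entries (steps \<pi>))"
  using assms unfolding Tpaths_iff by simp_all

lemma Tpaths_Cons:
  assumes "\<pi> \<in> Tpaths Q D a b"
  obtains \<rho> where "\<pi> = a # \<rho>" "\<rho> \<noteq> []" "last \<rho> = b"
proof (cases \<pi>)
  case (Cons u \<rho>)
  with assms show thesis
    unfolding Tpaths_iff by (intro that) auto
qed (use assms in \<open>simp add: Tpaths_iff\<close>)

lemma Tpaths_tl_avoids:
  assumes "\<pi> \<in> Tpaths Q D a b" "v \<noteq> b" "\<And>c. c \<in> set (odd_entries (steps \<pi>)) \<Longrightarrow> v \<notin> c"
  shows "v \<notin> set (tl \<pi>)"
  using set_tl_subset_odd_steps[of \<pi>] Tpaths_last[OF assms(1)] assms(2,3) by blast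

lemma Tpaths_start_not_revisited:
  assumes "\<pi> \<in> Tpaths Q D a b" "a \<noteq> b"
  shows "a \<notin> set (tl \<pi>)"
proof (rule Tpaths_tl_avoids[OF assms])
  show "a \<notin> c" if "c \<in> set (odd_entries (steps \<pi>))" for c
    using Tpaths_odd_steps_cross[OF assms(1) that] by (rule crosses_not_mem)
qed

lemma finite_Tpaths:
  assumes "finite Q"
  shows "finite (Tpaths Q D a b)"
proof (rule finite_subset)
  show "Tpaths Q D a b \<subseteq> {\<pi>. set \<pi> \<subseteq> Q \<and> length \<pi> \<le> Suc (card (diag Q))}"
  proof
    fix \<pi> assume \<pi>: "\<pi> \<in> Tpaths Q D a b"
    have "length (steps \<pi>) = card (set (steps \<pi>))"
      using Tpaths_steps_distinct[OF \<pi>] by (simp add: distinct_card)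
    also have "\<dots> \<le> card (diag Q)"
      using Tpaths_steps_diag[OF \<pi>] finite_diag[OF assms] by (rule card_mono[rotated])
    finally show "\<pi> \<in> {\<pi>. set \<pi> \<subseteq> Q \<and> length \<pi> \<le> Suc (card (diag Q))}"
      using Tpaths_set[OF \<pi>] by simp
  qed
  show "finite {\<pi>. set \<pi> \<subseteq> Q \<and> length \<pi> \<le> Suc (card (diag Q))}"
    using assms by (rule finite_lists_length_le)
qed

lemma sf_right_inverse: "(a::'k::semifield) * inverse a = 1"
  using sf_left_inverse[of a] by (simp add: mult.commute)

lemma sf_distrib_left: "(c::'k::semifield) * (a + b) = c * a + c * b"
  using sf_distrib[of a b c] by (simp add: mult.commute)

lemma sf_inverse_unique: "(a::'k::semifield) * b = 1 \<Longrightarrow> inverse a = b"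
  by (metis mult.assoc mult_1 sf_left_inverse)

lemma sf_inverse_mult: "inverse ((a::'k::semifield) * b) = inverse a * inverse b"
  by (rule sf_inverse_unique) (simp add: mult_ac sf_right_inverse)

lemma sf_inverse_inverse: "inverse (inverse (a::'k::semifield)) = a"
  by (rule sf_inverse_unique) (rule sf_left_inverse)

lemma tweight_Cons_Cons: "tweight f (u # v # w) = f {u, v} * inverse (tweight f (v # w))"
proof -
  let ?n = "length w"
  have evens: "{k. k < Suc ?n \<and> even k} = insert 0 (Suc ` {k. k < ?n \<and> odd k})"
    by (auto simp: image_iff) (metis Suc_less_eq even_Suc not0_implies_Suc)
  have odds: "{k. k < Suc ?n \<and> odd k} = Suc ` {k. k < ?n \<and> even k}"
    by (auto simp: image_iff elim: oddE)
  have step_Suc: "step (u # v # w) (Suc k) = step (v # w) k" for k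
    by (simp add: step_def)
  have step_0: "step (u # v # w) 0 = {u, v}"
    by (simp add: step_def)
  have "tweight f (u # v # w) =
      f {u, v} * (\<Prod>k | k < ?n \<and> odd k. f (step (v # w) k)) /
        (\<Prod>k | k < ?n \<and> even k. f (step (v # w) k))"
    unfolding tweight_def length_Cons diff_Suc_1 evens odds
    by (simp add: prod.reindex step_Suc step_0)
  then show ?thesis
    by (simp add: tweight_def sf_divide sf_inverse_mult sf_inverse_inverse mult_ac)
qed

lemma comp_fun_commute_add: "comp_fun_commute (\<lambda>x s. (g x :: 'k::ab_semigroup_add) + s)"
  by unfold_locales (auto simp: fun_eq_iff add.left_commute)

lemma nesum_eq_fold:
  assumes "finite A" "a \<in> A"
  shows "nesum g A = Finite_Set.fold (\<lambda>x s. g x + s) (g a) (A - {a})"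
proof -
  interpret comp_fun_commute "\<lambda>x s. g x + s"
    by (rule comp_fun_commute_add)
  have fold_swap: "Finite_Set.fold (\<lambda>x s. g x + s) (g a') (A - {a'})
      = Finite_Set.fold (\<lambda>x s. g x + s) (g a) (A - {a})" if "a' \<in> A" for a'
  proof (cases "a' = a")
    case False
    let ?R = "A - {a, a'}"
    have R: "A - {a'} = insert a ?R" "A - {a} = insert a' ?R" "finite ?R" "a \<notin> ?R" "a' \<notin> ?R"
      using that False assms by auto
    have "Finite_Set.fold (\<lambda>x s. g x + s) (g a') (A - {a'})
        = Finite_Set.fold (\<lambda>x s. g x + s) (g a + g a') ?R"
      unfolding R(1) using R(3,4) by (rule fold_insert2)
    also have "g a + g a' = g a' + g a"
      by (rule add.commute)
    also have "Finite_Set.fold (\<lambda>x s. g x + s) (g a' + g a) ?R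
        = Finite_Set.fold (\<lambda>x s. g x + s) (g a) (A - {a})"
      unfolding R(2) using R(3,5) by (rule fold_insert2[symmetric])
    finally show ?thesis .
  qed simp
  show ?thesis
    unfolding nesum_def Let_def by (rule fold_swap) (use assms(2) in \<open>rule someI\<close>)
qed

lemma nesum_singleton [simp]: "nesum g {x} = g x"
  by (simp add: nesum_eq_fold)

lemma nesum_insert:
  assumes "finite A" "A \<noteq> {}" "x \<notin> A"
  shows "nesum g (insert x A) = g x + nesum g A"
proof -
  interpret comp_fun_commute "\<lambda>x s. g x + s"
    by (rule comp_fun_commute_add)
  obtain a where a: "a \<in> A"
    using assms(2) by blast
  have "insert x A - {a} = insert x (A - {a})"
    using assms(3) a by auto
  then have "nesum g (insert x A) = g x + Finite_Set.fold (\<lambda>x s. g x + s) (g a) (A - {a})"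
    using assms a by (simp add: nesum_eq_fold[of _ a])
  also have "\<dots> = g x + nesum g A"
    using assms(1) a by (simp add: nesum_eq_fold)
  finally show ?thesis .
qed

lemma nesum_Un_disjoint:
  assumes "finite A" "A \<noteq> {}" "finite B" "B \<noteq> {}" "A \<inter> B = {}"
  shows "nesum g (A \<union> B) = nesum g A + nesum g B"
  using assms
proof (induction A rule: finite_ne_induct)
  case (insert x F)
  then show ?case
    by (simp add: nesum_insert add.assoc)
qed (simp add: nesum_insert)

lemma nesum_image_mult:
  assumes "finite A" "A \<noteq> {}" "inj_on h A" "\<And>x. x \<in> A \<Longrightarrow> g (h x) = c * g' x"
  shows "nesum g (h ` A) = c * (nesum g' A :: 'k::semifield)"
  using assms
proof (induction A rule: finite_ne_induct)
  case (insert x F)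
  then have "h x \<notin> h ` F"
    by auto
  with insert show ?case
    by (simp add: nesum_insert sf_distrib_left)
qed simp

section \<open>Extending T-paths across the nearest crossing diagonal\<close>

locale nearest_crossing =
  fixes Q :: "'v::linorder set" and E :: "'v set set" and x y a b :: 'v
  assumes diagonals: "E \<subseteq> diag Q"
    and noncrossing: "\<And>c d. c \<in> E \<Longrightarrow> d \<in> E \<Longrightarrow> \<not> crosses c d"
    and edge_in: "{x, y} \<in> E"
    and b_between: "cyc_oo x b y"
    and a_between: "cyc_oo y a x"
    and a_in: "a \<in> Q"
    and crossing_in_arc: "\<And>c v. c \<in> E \<Longrightarrow> crosses c {a, b} \<Longrightarrow> v \<in> c \<Longrightarrow> cyc_cc x v y"
begin

text \<open>\<open>Q2\<close> and \<open>E2\<close> are the paper's \<open>P\<^sub>2\<close> and \<open>D\<^sub>2\<close>.\<close>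

definition Q2 :: "'v set" where
  "Q2 = {v \<in> Q. cyc_cc x v y}"

definition E2 :: "'v set set" where
  "E2 = {c \<in> E. \<forall>v\<in>c. cyc_cc x v y} - {{x, y}}"

lemma x_neq_y: "x \<noteq> y"
  using b_between by (rule cyc_oo_distinct)

lemma x_in_Q2: "x \<in> Q2" and y_in_Q2: "y \<in> Q2"
  using diagonals edge_in by (auto simp: Q2_def diag_def doubleton_eq_iff)

lemma b_in_Q2: "b \<in> Q \<Longrightarrow> b \<in> Q2"
  using b_between unfolding Q2_def cyc_oo_def by simp

lemma a_notin_arc: "\<not> cyc_cc x a y"
  using a_between unfolding cyclic_order_simps by (smt (verit) less_trans less_irrefl linorder_neqE)

lemma a_notin_Q2: "a \<notin> Q2"
  using a_notin_arc unfolding Q2_def by blast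

lemma Q2_subset: "Q2 \<subseteq> Q"
  unfolding Q2_def by blast

lemma card_Q2_less: "finite Q \<Longrightarrow> card Q2 < card Q"
  using Q2_subset a_in a_notin_Q2 by (intro psubset_card_mono) blast+

lemma E2_subset: "E2 \<subseteq> E"
  unfolding E2_def by blast

lemma E2_diag: "E2 \<subseteq> diag Q2"
proof
  fix c assume c: "c \<in> E2"
  then have "c \<in> diag Q"
    using E2_subset diagonals by blast
  then obtain u v where "c = {u, v}" "u \<in> Q" "v \<in> Q" "u \<noteq> v"
    unfolding diag_def by blast
  moreover from c this(1) have "cyc_cc x u y" "cyc_cc x v y"
    unfolding E2_def by simp_all
  ultimately show "c \<in> diag Q2"
    unfolding diag_def Q2_def by blast
qed

lemma Q2_diagE:
  assumes "c \<in> diag Q2"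
  obtains u v where "c = {u, v}" "cyc_cc x u y" "cyc_cc x v y"
  using assms unfolding diag_def Q2_def by blast

lemma edge_crosses_segment: "crosses {x, y} {a, b}"
  using a_between b_between unfolding cyclic_order_simps
  by (smt (verit) less_trans less_irrefl linorder_neqE)

lemma arc_chord_not_crossing:
  assumes "cyc_cc x u y" "cyc_cc x v y" "c \<in> E" "c \<notin> E2"
  shows "\<not> crosses {u, v} c"
proof -
  obtain s t where c: "c = {s, t}" "s \<noteq> t"
    using assms(3) diagonals unfolding diag_def by blast
  have "cyc_cc y s x \<and> cyc_cc y t x"
  proof (cases "c = {x, y}")
    case True
    then show ?thesis
      using c by (auto simp: doubleton_eq_iff)
  next
    case False
    with assms(3,4) have "\<not> (cyc_cc x s y \<and> cyc_cc x t y)"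
      unfolding E2_def c by auto
    moreover have "\<not> crosses {s, t} {x, y}"
      using noncrossing[OF assms(3) edge_in] c by simp
    ultimately show ?thesis
      using noncrossing_same_side[of s t x y] c False x_neq_y by auto
  qed
  with assms(1,2) show ?thesis
    unfolding c using opposite_arcs_not_crossing[of x u y v s t] by blast
qed

lemma first_step_not_crossing:
  assumes "p = x \<or> p = y" "c \<in> E"
  shows "\<not> crosses {a, p} c"
proof
  assume crosses: "crosses {a, p} c"
  obtain s t where c: "c = {s, t}"
    using assms(2) diagonals unfolding diag_def by blast
  have "\<not> crosses {s, t} {x, y}"
    using noncrossing[OF assms(2) edge_in] c by simp
  with crosses assms(1) a_between b_between
  have "crosses {s, t} {a, b} \<and> \<not> (cyc_cc x s y \<and> cyc_cc x t y)"
    unfolding c cyclic_order_simps by (smt (verit) less_trans less_irrefl linorder_neqE)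
  then show False
    using crossing_in_arc[OF assms(2)] c by blast
qed

lemma arc_chord_crosses_segment:
  assumes "q = x \<or> q = y" "cyc_cc x s y" "cyc_cc x t y" "crosses {s, t} {q, b}"
  shows "crosses {s, t} {a, b}"
  using assms a_between b_between unfolding cyclic_order_simps
  by (smt (verit) less_trans less_irrefl linorder_neqE)

lemma Tpaths_Q2_steps:
  assumes \<tau>: "\<tau> \<in> Tpaths Q2 E2 q b" and q: "q = x \<or> q = y"
  shows "\<And>c d. c \<in> set (steps \<tau>) \<Longrightarrow> d \<in> E \<Longrightarrow> \<not> crosses c d"
    and "\<And>c. c \<in> set (odd_entries (steps \<tau>)) \<Longrightarrow> crosses c {a, b}"
    and "sorted_wrt (cross_before a b) (odd_entries (steps \<tau>))"
proof -
  show "\<not> crosses c d" if c: "c \<in> set (steps \<tau>)" and d: "d \<in> E" for c d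
  proof (cases "d \<in> E2")
    case True
    with \<tau> c show ?thesis
      by (rule Tpaths_steps_not_crossing)
  next
    case False
    from Tpaths_steps_diag[OF \<tau>] c have "c \<in> diag Q2" ..
    then obtain u v where "c = {u, v}" "cyc_cc x u y" "cyc_cc x v y"
      by (rule Q2_diagE)
    with d False show ?thesis
      using arc_chord_not_crossing by simp
  qed
  show "crosses c {a, b}" if c: "c \<in> set (odd_entries (steps \<tau>))" for c
  proof -
    from set_odd_entries_subset c have "c \<in> set (steps \<tau>)"
      by (rule subsetD)
    with Tpaths_steps_diag[OF \<tau>] have "c \<in> diag Q2" ..
    then obtain u v where "c = {u, v}" "cyc_cc x u y" "cyc_cc x v y"
      by (rule Q2_diagE)
    moreover have "crosses c {q, b}"
      using \<tau> c by (rule Tpaths_odd_steps_cross)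
    ultimately show ?thesis
      using arc_chord_crosses_segment[OF q] by simp
  qed
  show "sorted_wrt (cross_before a b) (odd_entries (steps \<tau>))"
    using Tpaths_odd_steps_sorted[OF \<tau>] unfolding cross_before_def .
qed

lemma Tpaths_Q2_odd_steps_after_edge:
  assumes \<tau>: "\<tau> \<in> Tpaths Q2 E2 q b" and c: "c \<in> set (odd_entries (steps \<tau>))"
  shows "cross_before a b {x, y} c"
proof -
  from set_odd_entries_subset c have "c \<in> set (steps \<tau>)"
    by (rule subsetD)
  with Tpaths_steps_diag[OF \<tau>] have "c \<in> diag Q2" ..
  then have "c \<subseteq> side_towards {x, y} b"
    unfolding side_towards_eq[OF b_between] by (auto elim!: Q2_diagE)
  moreover have "c \<noteq> {x, y}"
    using Tpaths_odd_steps_in[OF \<tau> c] unfolding E2_def by blast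
  ultimately show ?thesis
    unfolding cross_before_def by simp
qed

end

text \<open>\<open>p\<close> is the second vertex of T-paths from \<open>a\<close>, and \<open>q\<close> the first vertex of the
  corresponding T-paths of \<open>Q2\<close>.\<close>

locale nearest_crossing_at = nearest_crossing +
  fixes p q
  assumes endpoints: "p = x \<and> q = y \<or> p = y \<and> q = x"
begin

lemma p_q_cases: "p = x \<or> p = y" "q = x \<or> q = y"
  using endpoints by auto

lemma edge_eq: "{p, q} = {x, y}"
  using endpoints by auto

lemma p_neq_q: "p \<noteq> q"
  using endpoints x_neq_y by auto

lemma p_in_Q2: "p \<in> Q2" and q_in_Q2: "q \<in> Q2"
  using endpoints x_in_Q2 y_in_Q2 by auto

lemma q_neq_b: "q \<noteq> b" and p_neq_b: "p \<noteq> b"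
  using endpoints b_between by (auto simp: cyc_oo_iff_less)

lemma first_step_diag: "{a, p} \<in> diag Q"
  using a_in p_in_Q2 a_notin_Q2 Q2_subset unfolding diag_def by blast

lemma edge_diag: "{q, p} \<in> diag Q"
  using edge_in diagonals edge_eq by (auto simp: insert_commute)

lemma edge_not_crossing: "d \<in> E \<Longrightarrow> \<not> crosses {q, p} d"
  using noncrossing[OF edge_in] edge_eq by (simp add: insert_commute)

definition extend where
  "extend \<tau> = (if \<tau> ! 1 = p then a # tl \<tau> else a # p # \<tau>)"

definition retract where
  "retract \<pi> = (if \<pi> ! 2 = q then drop 2 \<pi> else q # tl \<pi>)"

lemma Tpaths_Q2_Cons:
  assumes \<tau>: "\<tau> \<in> Tpaths Q2 E2 q b"
  obtains \<rho> where "\<tau> = q # \<rho>" "\<rho> \<noteq> []" "last \<rho> = b" "q \<notin> set \<rho>"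
proof -
  obtain \<rho> where "\<tau> = q # \<rho>" "\<rho> \<noteq> []" "last \<rho> = b"
    using \<tau> by (rule Tpaths_Cons)
  moreover from this have "q \<notin> set \<rho>"
    using Tpaths_start_not_revisited[OF \<tau> q_neq_b] by simp
  ultimately show thesis
    by (rule that)
qed

lemma Tpaths_Q2_edge_first:
  assumes \<tau>: "\<tau> \<in> Tpaths Q2 E2 q b" and second: "\<tau> ! 1 = p"
  obtains \<rho> where "\<tau> = q # p # \<rho>" "\<rho> \<noteq> []" "q \<notin> set \<rho>"
proof -
  obtain \<rho> where \<rho>: "\<tau> = q # \<rho>" "\<rho> \<noteq> []" "last \<rho> = b" "q \<notin> set \<rho>"
    using \<tau> by (rule Tpaths_Q2_Cons)
  with second obtain \<rho>' where "\<rho> = p # \<rho>'"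
    by (cases \<rho>) auto
  moreover from this \<rho>(3) p_neq_b have "\<rho>' \<noteq> []"
    by auto
  ultimately show thesis
    using that \<rho>(1,4) by simp
qed

lemma Tpaths_Q2_edge_notin:
  assumes \<tau>: "\<tau> \<in> Tpaths Q2 E2 q b" and second: "\<tau> ! 1 \<noteq> p"
  shows "{x, y} \<notin> set (steps \<tau>)"
proof
  assume edge: "{x, y} \<in> set (steps \<tau>)"
  obtain \<rho> where \<tau>_eq: "\<tau> = q # \<rho>" and \<rho>: "\<rho> \<noteq> []" "q \<notin> set \<rho>"
    using \<tau> by (rule Tpaths_Q2_Cons)
  have "{x, y} \<notin> set (steps \<rho>)"
    using steps_subset \<rho>(2) edge_eq by fastforce
  moreover have "{q, hd \<rho>} \<noteq> {x, y}"
    using second \<tau>_eq \<rho>(1) edge_eq p_neq_q by (cases \<rho>) (auto simp: doubleton_eq_iff)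
  ultimately show False
    using edge unfolding \<tau>_eq steps_Cons[OF \<rho>(1)] by simp
qed

lemma extend_Tpaths_edge_first:
  assumes \<tau>: "q # p # \<rho> \<in> Tpaths Q2 E2 q b"
  shows "a # p # \<rho> \<in> Tpaths Q E a b"
proof -
  note \<tau>_steps = Tpaths_Q2_steps[OF \<tau> p_q_cases(2)]
  have \<rho>_in_Q2: "set \<rho> \<subseteq> Q2"
    using Tpaths_set[OF \<tau>] by simp
  have odd_steps: "odd_entries (steps (a # p # \<rho>)) = odd_entries (steps (q # p # \<rho>))"
    by (simp add: odd_entries_Cons)
  show ?thesis
    unfolding Tpaths_iff
  proof (intro conjI ballI)
    show "2 \<le> length (a # p # \<rho>)" "hd (a # p # \<rho>) = a"
      by simp_all
    show "last (a # p # \<rho>) = b"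
      using Tpaths_last[OF \<tau>] p_neq_b by (cases \<rho>) simp_all
    show "set (a # p # \<rho>) \<subseteq> Q"
      using \<rho>_in_Q2 a_in p_in_Q2 Q2_subset by auto
    show "set (steps (a # p # \<rho>)) \<subseteq> diag Q"
      using Tpaths_steps_diag[OF \<tau>] first_step_diag diag_mono[OF Q2_subset] by auto
    have "{a, p} \<notin> set (steps (p # \<rho>))"
      using steps_subset \<rho>_in_Q2 p_in_Q2 a_notin_Q2 by fastforce
    then show "distinct (steps (a # p # \<rho>))"
      using Tpaths_steps_distinct[OF \<tau>] by simp
  next
    fix c d assume "c \<in> set (steps (a # p # \<rho>))" "d \<in> E"
    then show "\<not> crosses c d"
      using \<tau>_steps(1) first_step_not_crossing[OF p_q_cases(1)] by auto
  next
    fix c assume "c \<in> set (odd_entries (steps (a # p # \<rho>)))"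
    then show "c \<in> E" "crosses c {a, b}"
      unfolding odd_steps using Tpaths_odd_steps_in[OF \<tau>] \<tau>_steps(2) E2_subset by auto
  next
    show "sorted_wrt (cross_before a b) (odd_entries (steps (a # p # \<rho>)))"
      unfolding odd_steps by (rule \<tau>_steps(3))
  qed
qed

lemma extend_Tpaths_edge_second:
  assumes \<tau>: "\<tau> \<in> Tpaths Q2 E2 q b" and second: "\<tau> ! 1 \<noteq> p"
  shows "a # p # \<tau> \<in> Tpaths Q E a b"
proof -
  note \<tau>_steps = Tpaths_Q2_steps[OF \<tau> p_q_cases(2)]
  obtain \<rho> where \<tau>_eq: "\<tau> = q # \<rho>"
    using \<tau> by (rule Tpaths_Cons)
  have steps_eq: "steps (a # p # \<tau>) = {a, p} # {x, y} # steps \<tau>"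
    unfolding \<tau>_eq by (simp add: edge_eq)
  have odd_steps: "odd_entries (steps (a # p # \<tau>)) = {x, y} # odd_entries (steps \<tau>)"
    unfolding steps_eq by simp
  have \<tau>_in_Q2: "set \<tau> \<subseteq> Q2"
    by (rule Tpaths_set[OF \<tau>])
  show ?thesis
    unfolding Tpaths_iff
  proof (intro conjI ballI)
    show "2 \<le> length (a # p # \<tau>)" "hd (a # p # \<tau>) = a"
      by simp_all
    show "last (a # p # \<tau>) = b"
      using Tpaths_last[OF \<tau>] \<tau>_eq by simp
    show "set (a # p # \<tau>) \<subseteq> Q"
      using \<tau>_in_Q2 a_in p_in_Q2 Q2_subset by auto
    show "set (steps (a # p # \<tau>)) \<subseteq> diag Q"
      using Tpaths_steps_diag[OF \<tau>] first_step_diag edge_in diagonals diag_mono[OF Q2_subset]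
      unfolding steps_eq by auto
    have "{a, p} \<notin> set (steps \<tau>)"
      using steps_subset \<tau>_in_Q2 a_notin_Q2 by fastforce
    moreover have "{a, p} \<noteq> {x, y}"
      using a_notin_arc by (auto simp: doubleton_eq_iff)
    ultimately show "distinct (steps (a # p # \<tau>))"
      using Tpaths_steps_distinct[OF \<tau>] Tpaths_Q2_edge_notin[OF \<tau> second] unfolding steps_eq by simp
  next
    fix c d assume "c \<in> set (steps (a # p # \<tau>))" "d \<in> E"
    then show "\<not> crosses c d"
      using \<tau>_steps(1) first_step_not_crossing[OF p_q_cases(1)] noncrossing[OF edge_in]
      unfolding steps_eq by auto
  next
    fix c assume "c \<in> set (odd_entries (steps (a # p # \<tau>)))"
    then show "c \<in> E" "crosses c {a, b}"
      unfolding odd_steps using Tpaths_odd_steps_in[OF \<tau>] \<tau>_steps(2) E2_subset edge_in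
        edge_crosses_segment by auto
  next
    show "sorted_wrt (cross_before a b) (odd_entries (steps (a # p # \<tau>)))"
      unfolding odd_steps using \<tau>_steps(3) Tpaths_Q2_odd_steps_after_edge[OF \<tau>] by simp
  qed
qed

lemma extend_Tpaths:
  assumes \<tau>: "\<tau> \<in> Tpaths Q2 E2 q b"
  shows "extend \<tau> \<in> Tpaths Q E a b"
proof (cases "\<tau> ! 1 = p")
  case True
  obtain \<rho> where "\<tau> = q # p # \<rho>"
    using \<tau> True by (rule Tpaths_Q2_edge_first)
  with \<tau> show ?thesis
    unfolding extend_def by (simp add: extend_Tpaths_edge_first)
next
  case False
  with \<tau> show ?thesis
    unfolding extend_def by (simp add: extend_Tpaths_edge_second)
qed

lemma nth_extend_1: "\<tau> \<noteq> [] \<Longrightarrow> extend \<tau> ! 1 = p"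
  by (cases \<tau>) (simp_all add: extend_def)

lemma retract_extend:
  assumes \<tau>: "\<tau> \<in> Tpaths Q2 E2 q b"
  shows "retract (extend \<tau>) = \<tau>"
proof (cases "\<tau> ! 1 = p")
  case True
  obtain \<rho> where "\<tau> = q # p # \<rho>" "\<rho> \<noteq> []" "q \<notin> set \<rho>"
    using \<tau> True by (rule Tpaths_Q2_edge_first)
  then show ?thesis
    by (cases \<rho>) (auto simp: extend_def retract_def)
next
  case False
  obtain \<rho> where "\<tau> = q # \<rho>"
    using \<tau> by (rule Tpaths_Q2_Cons)
  with False show ?thesis
    by (simp add: extend_def retract_def)
qed

lemma tweight_extend:
  assumes \<tau>: "\<tau> \<in> Tpaths Q2 E2 q b"
  shows "tweight f (extend \<tau>) = f {a, p} * inverse (f {x, y}) * tweight f \<tau>"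
proof (cases "\<tau> ! 1 = p")
  case True
  obtain \<rho> where \<tau>_eq: "\<tau> = q # p # \<rho>"
    using \<tau> True by (rule Tpaths_Q2_edge_first)
  let ?w = "inverse (tweight f (p # \<rho>))"
  have "tweight f \<tau> = f {x, y} * ?w"
    unfolding \<tau>_eq tweight_Cons_Cons using edge_eq by (simp add: insert_commute)
  moreover have "inverse (f {x, y}) * (f {x, y} * ?w) = ?w"
    by (simp add: mult.assoc[symmetric] sf_left_inverse)
  ultimately have "f {a, p} * inverse (f {x, y}) * tweight f \<tau> = f {a, p} * ?w"
    by (simp add: mult.assoc)
  then show ?thesis
    unfolding extend_def using True \<tau>_eq by (simp add: tweight_Cons_Cons)
next
  case False
  obtain \<rho> where \<tau>_eq: "\<tau> = q # \<rho>"
    using \<tau> by (rule Tpaths_Q2_Cons)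
  have "tweight f (extend \<tau>) = f {a, p} * inverse (f {p, q} * inverse (tweight f \<tau>))"
    unfolding extend_def using False by (simp add: \<tau>_eq tweight_Cons_Cons)
  then show ?thesis
    by (simp add: edge_eq sf_inverse_mult sf_inverse_inverse mult.assoc)
qed

end

section \<open>Existence of T-paths\<close>

lemma nested_side_psubset:
  assumes "cyc_oo x b y" "cyc_oo s b t" "\<not> crosses {s, t} {x, y}" "{s, t} \<noteq> {x, y}"
    and "\<not> (cyc_cc x s y \<and> cyc_cc x t y)" "x \<in> Q" "y \<in> Q"
  shows "{v \<in> Q. cyc_cc t v s} \<subset> {v \<in> Q. cyc_cc y v x}"
proof
  have "s \<noteq> t" "x \<noteq> y"
    using assms(1,2) by (simp_all add: cyc_oo_distinct)
  with assms(3-5) have s_t: "cyc_cc y s x" "cyc_cc y t x"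
    using noncrossing_same_side[of s t x y] by auto
  show "{v \<in> Q. cyc_cc t v s} \<subseteq> {v \<in> Q. cyc_cc y v x}"
    using arc_nested[OF assms(1) s_t assms(2)] by blast
  have "\<not> (cyc_cc t x s \<and> cyc_cc t y s)"
    using arc_nested_eq[OF assms(1) s_t assms(2)] assms(4) by auto
  with assms(6,7) show "{v \<in> Q. cyc_cc t v s} \<noteq> {v \<in> Q. cyc_cc y v x}"
    by (auto simp: cyc_cc_iff_less)
qed

text \<open>The nearest crossing diagonal is one with the fewest vertices on the side of \<open>a\<close>.\<close>

lemma nearest_crossing_exists:
  assumes Q: "finite Q" and E: "E \<subseteq> diag Q" "\<And>c d. c \<in> E \<Longrightarrow> d \<in> E \<Longrightarrow> \<not> crosses c d"
    and c0: "c0 \<in> E" "crosses c0 {a, b}"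
  obtains x y where "{x, y} \<in> E" "cyc_oo x b y" "cyc_oo y a x"
    "\<And>c v. c \<in> E \<Longrightarrow> crosses c {a, b} \<Longrightarrow> v \<in> c \<Longrightarrow> cyc_cc x v y"
proof -
  define a_side where "a_side c = card {v \<in> Q. v \<in> side_towards c a}" for c
  obtain e where e: "e \<in> E" "crosses e {a, b}"
    and e_min: "\<And>c. c \<in> E \<Longrightarrow> crosses c {a, b} \<Longrightarrow> a_side e \<le> a_side c"
    using ex_has_least_nat[of "\<lambda>c. c \<in> E \<and> crosses c {a, b}" c0 a_side] c0 by blast
  obtain x y where xy: "e = {x, y}" "cyc_oo x b y" "cyc_oo y a x"
    using e(2) by (rule crossing_orientation)
  have a_side_e: "a_side e = card {v \<in> Q. cyc_cc y v x}"
    unfolding a_side_def xy(1) insert_commute[of x y] side_towards_eq[OF xy(3)] by simp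
  have "cyc_cc x v y" if c: "c \<in> E" "crosses c {a, b}" and v: "v \<in> c" for c v
  proof (rule ccontr)
    assume v_out: "\<not> cyc_cc x v y"
    obtain s t where st: "c = {s, t}" "cyc_oo s b t" "cyc_oo t a s"
      using c(2) by (rule crossing_orientation)
    have "\<not> crosses {s, t} {x, y}"
      using E(2)[OF c(1) e(1)] st(1) xy(1) by simp
    moreover have "{s, t} \<noteq> {x, y}" "\<not> (cyc_cc x s y \<and> cyc_cc x t y)"
      using v_out v st(1) by (auto simp: doubleton_eq_iff)
    moreover have "x \<in> Q" "y \<in> Q"
      using E(1) e(1) xy(1) unfolding diag_def by (auto simp: doubleton_eq_iff)
    ultimately have "{v \<in> Q. cyc_cc t v s} \<subset> {v \<in> Q. cyc_cc y v x}"
      by (rule nested_side_psubset[OF xy(2) st(2)])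
    then have "card {v \<in> Q. cyc_cc t v s} < a_side e"
      unfolding a_side_e using Q by (simp add: psubset_card_mono)
    then have "a_side c < a_side e"
      unfolding a_side_def st(1) insert_commute[of s t] side_towards_eq[OF st(3)] by simp
    with e_min[OF c] show False
      by simp
  qed
  with that e(1) xy show thesis
    by blast
qed

lemma Tpaths_nonempty:
  assumes "finite Q" "E \<subseteq> diag Q" "\<And>c d. c \<in> E \<Longrightarrow> d \<in> E \<Longrightarrow> \<not> crosses c d"
    and "a \<in> Q" "b \<in> Q" "a \<noteq> b"
  shows "Tpaths Q E a b \<noteq> {}"
  using assms
proof (induction "card Q" arbitrary: Q E a b rule: less_induct)
  case less
  show ?case
  proof (cases "\<exists>c\<in>E. crosses c {a, b}")
    case False
    have "[a, b] \<in> Tpaths Q E a b"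
      unfolding Tpaths_iff
    proof (intro conjI ballI)
      show "set (steps [a, b]) \<subseteq> diag Q"
        using less.prems(4-6) by (auto simp: diag_def)
      show "\<not> crosses c d" if "c \<in> set (steps [a, b])" "d \<in> E" for c d
        using False that crosses_commute by auto
    qed (use less.prems(4,5) in simp_all)
    then show ?thesis
      by blast
  next
    case True
    then obtain c0 where c0: "c0 \<in> E" "crosses c0 {a, b}"
      by blast
    obtain x y where "{x, y} \<in> E" "cyc_oo x b y" "cyc_oo y a x"
      "\<And>c v. c \<in> E \<Longrightarrow> crosses c {a, b} \<Longrightarrow> v \<in> c \<Longrightarrow> cyc_cc x v y"
      using nearest_crossing_exists[OF less.prems(1-3) c0] by blast
    with less.prems interpret nearest_crossing_at Q E x y a b x y
      by unfold_locales auto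
    have "Tpaths Q2 E2 y b \<noteq> {}"
    proof (rule less.hyps)
      show "card Q2 < card Q" "finite Q2" "E2 \<subseteq> diag Q2"
        using card_Q2_less less.prems(1) Q2_subset E2_diag finite_subset by blast+
      show "\<not> crosses c d" if "c \<in> E2" "d \<in> E2" for c d
        using that E2_subset noncrossing by blast
      show "y \<in> Q2" "b \<in> Q2" "y \<noteq> b"
        using y_in_Q2 b_in_Q2 less.prems(5) q_neq_b by simp_all
    qed
    then show ?thesis
      using extend_Tpaths by blast
  qed
qed

lemma (in nearest_crossing) Tpaths_Q2_nonempty:
  assumes "finite Q" "v \<in> Q2" "b \<in> Q2" "v \<noteq> b"
  shows "Tpaths Q2 E2 v b \<noteq> {}"
proof (rule Tpaths_nonempty)
  show "finite Q2" "E2 \<subseteq> diag Q2"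
    using assms(1) Q2_subset finite_subset E2_diag by blast+
  show "\<not> crosses c d" if "c \<in> E2" "d \<in> E2" for c d
    using that E2_subset noncrossing by blast
qed (use assms in simp_all)

section \<open>T-paths across an outer diagonal\<close>

locale outer_diagonal = nearest_crossing +
  assumes all_in_arc: "\<And>c v. c \<in> E \<Longrightarrow> v \<in> c \<Longrightarrow> cyc_cc x v y"
begin

lemma E2_eq: "E2 = E - {{x, y}}"
  using all_in_arc unfolding E2_def by blast

lemma Tpaths_tl_in_Q2:
  assumes \<pi>: "\<pi> \<in> Tpaths Q E a b"
  shows "set (tl \<pi>) \<subseteq> Q2"
proof
  fix v assume v: "v \<in> set (tl \<pi>)"
  have "cyc_cc x v y"
  proof (cases "v = b")
    case False
    with v obtain c where "c \<in> set (odd_entries (steps \<pi>))" "v \<in> c"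
      using Tpaths_tl_avoids[OF \<pi>] by blast
    with \<pi> show ?thesis
      using Tpaths_odd_steps_in all_in_arc by blast
  qed (use b_between in \<open>simp add: cyc_oo_def\<close>)
  moreover have "v \<in> Q"
    using v Tpaths_set[OF \<pi>] by (cases \<pi>) auto
  ultimately show "v \<in> Q2"
    unfolding Q2_def by simp
qed

lemma second_vertex_endpoint:
  assumes "cyc_cc x v y" "\<not> crosses {a, v} {x, y}" "a \<noteq> v"
  shows "v = x \<or> v = y"
  using assms a_between x_neq_y unfolding cyclic_order_simps
  by (smt (verit) less_trans less_irrefl linorder_neqE)

lemma Tpaths_second_vertex:
  assumes \<pi>: "\<pi> \<in> Tpaths Q E a b"
  shows "\<pi> ! 1 = x \<or> \<pi> ! 1 = y"
proof -
  obtain \<rho> where \<pi>_eq: "\<pi> = a # \<rho>" and "\<rho> \<noteq> []"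
    using \<pi> by (rule Tpaths_Cons)
  then have "hd \<rho> \<in> Q2" "\<pi> ! 1 = hd \<rho>"
    using Tpaths_tl_in_Q2[OF \<pi>] by (auto simp: hd_conv_nth)
  moreover have "\<not> crosses {a, hd \<rho>} {x, y}"
    using Tpaths_steps_not_crossing[OF \<pi>] edge_in
    unfolding \<pi>_eq steps_Cons[OF \<open>\<rho> \<noteq> []\<close>] by simp
  moreover have "a \<noteq> hd \<rho>"
    using \<open>hd \<rho> \<in> Q2\<close> a_notin_Q2 by blast
  ultimately show ?thesis
    using second_vertex_endpoint unfolding Q2_def by simp
qed

end

locale outer_diagonal_at = outer_diagonal + nearest_crossing_at
begin

lemma arc_chord_crosses_from_endpoint:
  assumes "cyc_cc x s y" "cyc_cc x t y" "crosses {s, t} {a, b}" "q \<noteq> s" "q \<noteq> t"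
  shows "crosses {s, t} {q, b}"
  using assms p_q_cases(2) a_between b_between unfolding cyclic_order_simps
  by (smt (verit) less_trans less_irrefl linorder_neqE)

lemma endpoint_beyond_arc_chord:
  assumes "cyc_cc x s y" "cyc_cc x t y" "crosses {s, t} {a, b}" "q \<in> side_towards {s, t} b"
  shows "q = s \<or> q = t"
proof -
  obtain u w where uw: "{s, t} = {u, w}" "cyc_oo u b w" "cyc_oo w a u"
    using assms(3) by (rule crossing_orientation)
  have "cyc_cc u q w"
    using assms(4) side_towards_eq[OF uw(2)] unfolding uw(1) by simp
  moreover have "cyc_cc x u y" "cyc_cc x w y"
    using assms(1,2) uw(1) by (auto simp: doubleton_eq_iff)
  ultimately have "q = u \<or> q = w"
    using uw(2,3) p_q_cases(2) a_between b_between unfolding cyclic_order_simps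
    by (smt (verit) less_trans less_irrefl linorder_neqE)
  with uw(1) show ?thesis
    by (auto simp: doubleton_eq_iff)
qed

lemma odd_steps_avoid_q:
  assumes \<pi>: "\<pi> \<in> Tpaths Q E a b" and sorted: "sorted_wrt (cross_before a b) (c0 # cs)"
    and c0: "c0 \<in> set (odd_entries (steps \<pi>))" "q \<notin> c0" and c: "c \<in> set (c0 # cs)"
  shows "q \<notin> c"
proof
  assume q: "q \<in> c"
  with c0(2) c have "c \<subseteq> side_towards c0 b"
    using sorted unfolding cross_before_def by auto
  with q have q_side: "q \<in> side_towards c0 b"
    by blast
  have "c0 \<in> E" "crosses c0 {a, b}"
    using Tpaths_odd_steps_in[OF \<pi> c0(1)] Tpaths_odd_steps_cross[OF \<pi> c0(1)] .
  moreover obtain s t where "c0 = {s, t}"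
    using diagonals \<open>c0 \<in> E\<close> unfolding diag_def by blast
  ultimately show False
    using endpoint_beyond_arc_chord[of s t] q_side c0(2) all_in_arc by auto
qed

lemma Tpaths_Q2I:
  assumes "2 \<le> length \<tau>" "hd \<tau> = q" "last \<tau> = b" "set \<tau> \<subseteq> Q2"
    and "set (steps \<tau>) \<subseteq> diag Q" "distinct (steps \<tau>)"
    and "\<And>c d. c \<in> set (steps \<tau>) \<Longrightarrow> d \<in> E \<Longrightarrow> \<not> crosses c d"
    and odd: "\<And>c. c \<in> set (odd_entries (steps \<tau>)) \<Longrightarrow> c \<in> E \<and> crosses c {a, b} \<and> q \<notin> c"
    and "sorted_wrt (cross_before a b) (odd_entries (steps \<tau>))"
  shows "\<tau> \<in> Tpaths Q2 E2 q b"
  unfolding Tpaths_iff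
proof (intro conjI ballI)
  show "set (steps \<tau>) \<subseteq> diag Q2"
    using assms(5,4) by (rule steps_diag_restrict)
  show "\<not> crosses c d" if "c \<in> set (steps \<tau>)" "d \<in> E2" for c d
    using assms(7) that E2_subset by blast
  fix c assume c: "c \<in> set (odd_entries (steps \<tau>))"
  obtain s t where "c = {s, t}"
    using odd[OF c] diagonals unfolding diag_def by blast
  with odd[OF c] show "crosses c {q, b}"
    using arc_chord_crosses_from_endpoint all_in_arc by auto
  from odd[OF c] have "c \<noteq> {x, y}"
    using p_q_cases(2) by blast
  with odd[OF c] show "c \<in> E2"
    unfolding E2_eq by simp
next
  show "sorted_wrt (cross_before q b) (odd_entries (steps \<tau>))"
    using assms(9) unfolding cross_before_def .
qed (use assms in simp_all)

lemma odd_steps_avoid_q_edge_first: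
  assumes \<pi>: "a # p # r # \<rho> \<in> Tpaths Q E a b" and r: "r \<noteq> q"
    and c: "c \<in> set (odd_entries (steps (a # p # r # \<rho>)))"
  shows "q \<notin> c"
proof (rule odd_steps_avoid_q[OF \<pi>])
  have odd_steps: "odd_entries (steps (a # p # r # \<rho>)) = {p, r} # odd_entries (steps (r # \<rho>))"
    by simp
  show "sorted_wrt (cross_before a b) ({p, r} # odd_entries (steps (r # \<rho>)))"
    using Tpaths_odd_steps_sorted[OF \<pi>] unfolding odd_steps .
  show "{p, r} \<in> set (odd_entries (steps (a # p # r # \<rho>)))" "q \<notin> {p, r}"
    using r p_neq_q unfolding odd_steps by auto
  show "c \<in> set ({p, r} # odd_entries (steps (r # \<rho>)))"
    using c unfolding odd_steps .
qed

lemma odd_steps_avoid_q_edge_second: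
  assumes \<pi>: "a # p # q # \<sigma> \<in> Tpaths Q E a b" and c: "c \<in> set (odd_entries (steps (q # \<sigma>)))"
  shows "q \<notin> c"
proof -
  obtain s1 s2 \<sigma>' where \<sigma>: "\<sigma> = s1 # s2 # \<sigma>'"
    using c by (cases \<sigma> rule: odd_entries.cases) auto
  show ?thesis
  proof (rule odd_steps_avoid_q[OF \<pi>])
    show "sorted_wrt (cross_before a b) ({s1, s2} # odd_entries (steps (s2 # \<sigma>')))"
      using Tpaths_odd_steps_sorted[OF \<pi>] unfolding \<sigma> by simp
    show "{s1, s2} \<in> set (odd_entries (steps (a # p # q # \<sigma>)))"
      unfolding \<sigma> by simp
    show "q \<notin> {s1, s2}"
      using Tpaths_steps_distinct[OF \<pi>] Tpaths_steps_diag[OF \<pi>] unfolding \<sigma>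
      by (auto simp: diag_def doubleton_eq_iff)
    show "c \<in> set ({s1, s2} # odd_entries (steps (s2 # \<sigma>')))"
      using c unfolding \<sigma> by simp
  qed
qed

lemma retract_Tpaths_edge_first:
  assumes \<pi>: "a # p # r # \<rho> \<in> Tpaths Q E a b" and r: "r \<noteq> q"
  shows "q # p # r # \<rho> \<in> Tpaths Q2 E2 q b"
proof -
  note avoid = odd_steps_avoid_q_edge_first[OF \<pi> r]
  have tl_in_Q2: "set (p # r # \<rho>) \<subseteq> Q2"
    using Tpaths_tl_in_Q2[OF \<pi>] by simp
  have "q \<notin> set (p # r # \<rho>)"
    using Tpaths_tl_avoids[OF \<pi> q_neq_b avoid] by simp
  then have edge_notin: "{q, p} \<notin> set (steps (p # r # \<rho>))"
    using steps_subset by fastforce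
  show ?thesis
  proof (rule Tpaths_Q2I)
    show "2 \<le> length (q # p # r # \<rho>)" "hd (q # p # r # \<rho>) = q"
      by simp_all
    show "last (q # p # r # \<rho>) = b"
      using Tpaths_last[OF \<pi>] by simp
    show "set (q # p # r # \<rho>) \<subseteq> Q2"
      using tl_in_Q2 q_in_Q2 by simp
    show "set (steps (q # p # r # \<rho>)) \<subseteq> diag Q"
      using Tpaths_steps_diag[OF \<pi>] edge_diag by simp
    show "distinct (steps (q # p # r # \<rho>))"
      using Tpaths_steps_distinct[OF \<pi>] edge_notin by simp
    show "\<not> crosses c d" if "c \<in> set (steps (q # p # r # \<rho>))" "d \<in> E" for c d
      using that Tpaths_steps_not_crossing[OF \<pi>] edge_not_crossing by auto
    show "c \<in> E \<and> crosses c {a, b} \<and> q \<notin> c"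
      if "c \<in> set (odd_entries (steps (q # p # r # \<rho>)))" for c
      using that Tpaths_odd_steps_in[OF \<pi>] Tpaths_odd_steps_cross[OF \<pi>] avoid by simp
    show "sorted_wrt (cross_before a b) (odd_entries (steps (q # p # r # \<rho>)))"
      using Tpaths_odd_steps_sorted[OF \<pi>] by simp
  qed
qed

lemma retract_Tpaths_edge_second:
  assumes \<pi>: "a # p # q # \<sigma> \<in> Tpaths Q E a b"
  shows "q # \<sigma> \<in> Tpaths Q2 E2 q b" and "(q # \<sigma>) ! 1 \<noteq> p"
proof -
  have \<sigma>: "\<sigma> \<noteq> []"
    using Tpaths_last[OF \<pi>] q_neq_b by auto
  have edge_notin: "{p, q} \<notin> set (steps (q # \<sigma>))"
    using Tpaths_steps_distinct[OF \<pi>] by simp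
  then show "(q # \<sigma>) ! 1 \<noteq> p"
    using \<sigma> by (cases \<sigma>) (auto simp: insert_commute)
  show "q # \<sigma> \<in> Tpaths Q2 E2 q b"
  proof (rule Tpaths_Q2I)
    show "2 \<le> length (q # \<sigma>)" "hd (q # \<sigma>) = q"
      using \<sigma> by (simp_all add: Suc_le_eq)
    show "last (q # \<sigma>) = b"
      using Tpaths_last[OF \<pi>] by simp
    show "set (q # \<sigma>) \<subseteq> Q2"
      using Tpaths_tl_in_Q2[OF \<pi>] by auto
    show "set (steps (q # \<sigma>)) \<subseteq> diag Q"
      using Tpaths_steps_diag[OF \<pi>] by simp
    show "distinct (steps (q # \<sigma>))"
      using Tpaths_steps_distinct[OF \<pi>] by simp
    show "\<not> crosses c d" if "c \<in> set (steps (q # \<sigma>))" "d \<in> E" for c d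
      using that Tpaths_steps_not_crossing[OF \<pi>] by simp
    show "c \<in> E \<and> crosses c {a, b} \<and> q \<notin> c" if "c \<in> set (odd_entries (steps (q # \<sigma>)))" for c
      using that Tpaths_odd_steps_in[OF \<pi>] Tpaths_odd_steps_cross[OF \<pi>]
        odd_steps_avoid_q_edge_second[OF \<pi>] by simp
    show "sorted_wrt (cross_before a b) (odd_entries (steps (q # \<sigma>)))"
      using Tpaths_odd_steps_sorted[OF \<pi>] by simp
  qed
qed

lemma retract_Tpaths:
  assumes \<pi>: "\<pi> \<in> Tpaths Q E a b" and second: "\<pi> ! 1 = p"
  shows "retract \<pi> \<in> Tpaths Q2 E2 q b" and "extend (retract \<pi>) = \<pi>"
proof -
  obtain \<rho> where \<pi>_eq: "\<pi> = a # \<rho>" "\<rho> \<noteq> []" "last \<rho> = b"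
    using \<pi> by (rule Tpaths_Cons)
  obtain \<rho>1 where \<rho>1: "\<rho> = p # \<rho>1"
    using \<pi>_eq(1,2) second by (cases \<rho>) simp_all
  moreover have "\<rho>1 \<noteq> []"
    using \<pi>_eq(3) p_neq_b unfolding \<rho>1 by auto
  ultimately obtain r \<rho>' where \<rho>_eq: "\<rho> = p # r # \<rho>'"
    by (cases \<rho>1) simp_all
  have "retract \<pi> \<in> Tpaths Q2 E2 q b \<and> extend (retract \<pi>) = \<pi>"
  proof (cases "r = q")
    case True
    with \<pi> show ?thesis
      using retract_Tpaths_edge_second[of \<rho>']
      unfolding \<pi>_eq(1) \<rho>_eq by (simp add: retract_def extend_def)
  next
    case False
    with \<pi> show ?thesis
      using retract_Tpaths_edge_first[of r \<rho>']
      unfolding \<pi>_eq(1) \<rho>_eq by (simp add: retract_def extend_def)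
  qed
  then show "retract \<pi> \<in> Tpaths Q2 E2 q b" "extend (retract \<pi>) = \<pi>"
    by simp_all
qed

lemma Tpaths_second_vertex_eq:
  "{\<pi> \<in> Tpaths Q E a b. \<pi> ! 1 = p} = extend ` Tpaths Q2 E2 q b"
proof (intro subsetI equalityI)
  fix \<pi> assume "\<pi> \<in> {\<pi> \<in> Tpaths Q E a b. \<pi> ! 1 = p}"
  then have "retract \<pi> \<in> Tpaths Q2 E2 q b" "\<pi> = extend (retract \<pi>)"
    using retract_Tpaths by simp_all
  then show "\<pi> \<in> extend ` Tpaths Q2 E2 q b"
    by (rule rev_image_eqI)
next
  fix \<pi> assume "\<pi> \<in> extend ` Tpaths Q2 E2 q b"
  then obtain \<tau> where \<tau>: "\<tau> \<in> Tpaths Q2 E2 q b" and \<pi>: "\<pi> = extend \<tau>"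
    by blast
  have "\<tau> \<noteq> []"
    using Tpaths_length[OF \<tau>] by auto
  with \<tau> show "\<pi> \<in> {\<pi> \<in> Tpaths Q E a b. \<pi> ! 1 = p}"
    unfolding \<pi> using extend_Tpaths nth_extend_1 by simp
qed

lemma inj_on_extend: "inj_on extend (Tpaths Q2 E2 q b)"
  using retract_extend by (rule inj_on_inverseI)

end

context outer_diagonal
begin

lemma nesum_Tpaths_split:
  assumes Q: "finite Q" and b: "b \<in> Q"
  shows "nesum (tweight f) (Tpaths Q E a b) =
    inverse (f {x, y}) * (f {a, y} * nesum (tweight f) (Tpaths Q2 E2 x b)
                          + f {a, x} * nesum (tweight f) (Tpaths Q2 E2 y b))"
proof -
  interpret via_y: outer_diagonal_at Q E x y a b y x
    by unfold_locales simp
  interpret via_x: outer_diagonal_at Q E x y a b x y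
    by unfold_locales simp
  let ?T = "\<lambda>v. Tpaths Q2 E2 v b"
  have T_finite: "finite (?T v)" for v
    using Q Q2_subset finite_subset by (blast intro: finite_Tpaths)
  note T_x = T_finite[of x] Tpaths_Q2_nonempty[OF Q x_in_Q2 b_in_Q2[OF b] via_y.q_neq_b]
  note T_y = T_finite[of y] Tpaths_Q2_nonempty[OF Q y_in_Q2 b_in_Q2[OF b] via_x.q_neq_b]
  have "Tpaths Q E a b = {\<pi> \<in> Tpaths Q E a b. \<pi> ! 1 = y} \<union> {\<pi> \<in> Tpaths Q E a b. \<pi> ! 1 = x}"
    using Tpaths_second_vertex by blast
  also have "\<dots> = via_y.extend ` ?T x \<union> via_x.extend ` ?T y"
    by (simp only: via_y.Tpaths_second_vertex_eq via_x.Tpaths_second_vertex_eq)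
  finally have split: "Tpaths Q E a b = via_y.extend ` ?T x \<union> via_x.extend ` ?T y" .
  have disjoint: "via_y.extend ` ?T x \<inter> via_x.extend ` ?T y = {}"
    unfolding via_y.Tpaths_second_vertex_eq[symmetric] via_x.Tpaths_second_vertex_eq[symmetric]
    using x_neq_y by auto
  have "nesum (tweight f) (Tpaths Q E a b) =
      nesum (tweight f) (via_y.extend ` ?T x) + nesum (tweight f) (via_x.extend ` ?T y)"
    unfolding split using T_x T_y disjoint by (intro nesum_Un_disjoint) auto
  also have "\<dots> = f {a, y} * inverse (f {x, y}) * nesum (tweight f) (?T x)
                  + f {a, x} * inverse (f {x, y}) * nesum (tweight f) (?T y)"
    using nesum_image_mult[where g = "tweight f" and g' = "tweight f",
        OF T_x via_y.inj_on_extend via_y.tweight_extend]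
      nesum_image_mult[where g = "tweight f" and g' = "tweight f",
        OF T_y via_x.inj_on_extend via_x.tweight_extend]
    by simp
  finally show ?thesis
    by (simp add: sf_distrib_left mult_ac)
qed

end

theorem lemma3p9:
  fixes V :: "'v::linorder set" and D D2 :: "'v set set" and \<zeta> \<eta> \<alpha> \<beta> :: 'v
    and f :: "'v set \<Rightarrow> 'k::semifield"
  assumes "polygon V"
    and "dissection V D" and "D \<noteq> {}"
    and "{\<zeta>, \<eta>} \<in> D"
    and "D = insert {\<zeta>, \<eta>} D2"
    and "polygon {e \<in> V. cyc_cc \<eta> e \<zeta>}"
    and "dissection {e \<in> V. cyc_cc \<eta> e \<zeta>} D2"
    and "\<alpha> \<in> {e \<in> V. cyc_oo \<zeta> e \<eta>}"
    and "\<beta> \<in> {e \<in> V. cyc_oo \<eta> e \<zeta>}"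
    and "T_formula {e \<in> V. cyc_cc \<eta> e \<zeta>} D2 f"
  shows "inverse (f {\<zeta>, \<eta>}) * (f {\<alpha>, \<zeta>} * f {\<eta>, \<beta>} + f {\<alpha>, \<eta>} * f {\<zeta>, \<beta>})
           = nesum (tweight f) (Tpaths V D \<alpha> \<beta>)"
proof -
  let ?W = "{e \<in> V. cyc_cc \<eta> e \<zeta>}"
  have D_diag: "D \<subseteq> diag V" and D2_diag: "D2 \<subseteq> diag ?W"
    using assms(2,7) unfolding dissection_def internal_def by blast+
  have in_arc: "cyc_cc \<eta> v \<zeta>" if "c \<in> D" "v \<in> c" for c v
    using that D2_diag unfolding assms(5) diag_def by auto
  interpret outer_diagonal V D \<eta> \<zeta> \<alpha> \<beta>
    using D_diag assms(2,4,8,9) in_arc by unfold_locales (auto simp: dissection_def insert_commute)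
  have "{\<eta>, \<zeta>} \<notin> D2"
    using assms(7) arc_endpoints_edge[of \<eta> V \<zeta>] x_in_Q2 y_in_Q2 x_neq_y
    unfolding dissection_def internal_def Q2_def by auto
  then have "E2 = D2"
    unfolding E2_eq using assms(5) by (auto simp: insert_commute)
  moreover have "Q2 = ?W"
    unfolding Q2_def ..
  moreover have "f {\<eta>, \<beta>} = nesum (tweight f) (Tpaths ?W D2 \<eta> \<beta>)"
    and "f {\<zeta>, \<beta>} = nesum (tweight f) (Tpaths ?W D2 \<zeta> \<beta>)"
    using assms(9,10) x_in_Q2 y_in_Q2 b_in_Q2 \<open>Q2 = ?W\<close> unfolding T_formula_def by (auto simp: cyc_oo_def)
  ultimately show ?thesis
    using nesum_Tpaths_split[of f] assms(1,9) by (simp add: polygon_def insert_commute)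
qed

end
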